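(* There exist absolute constants $c_1,c_2,C_0>0$ such that the following holds. Suppose $w$ is normalized so that $\sum_{i=1}^n\log w_i=0$, and suppose $\delta\le e^{-1}$, $C_{n,\delta}\ge c_1\log(n/\delta)$, and $k\ge c_2\, b\,(C_{n,\delta}+1)\max\{\Omega_{\max},E_{\max}\}$. Then with probability at least $1-\delta$, for all pairs $i,j\in\{1,\dots,n\}$, $$\left(\log\frac{\widehat W_i}{\widehat W_j}-\log\frac{w_i}{w_j}\right)^2\le 2\|V(F-p)\|_{(i,j)}^2+2\|\Delta\|_{(i,j)}^2,$$ and $\|\Delta\|_\infty\le C_0\, b\,C_{n,\delta}/k$.
   Context: $G=(V,E)$ is an undirected connected graph on $V=\{1,\dots,n\}$, each edge with a fixed orientation $(i,j)$; $B\in\mathbb{R}^{n\times|E|}$ is the incidence matrix (column of edge $(i,j)$ has $+1$ in row $i$, $-1$ in row $j$), $L=BB^T$, $L^\dagger$ its Moore–Penrose pseudoinverse. Weights $w$ are positive with $b\ge\max_{i,j}w_i/w_j$. For each edge $(i,j)$, $k$ independent comparisons are made, $i$ winning each with probability $p_{ij}=w_i/(w_i+w_j)$ (independent across edges); $F_{ij}$ is the fraction won by $i$, $F_{ji}=1-F_{ij}$, $R_{ij}=F_{ij}/F_{ji}$, $\rho_{ij}=w_i/w_j$, $v_{ij}=\rho_{ij}+2+\rho_{ij}^{-1}$; $F,p,R,\rho\in\mathbb{R}^{|E|}$ stack these over edges, $V=\mathrm{diag}(v_{ij})$. The estimator is $\log\widehat W=L^\dagger B\log R$. $\Delta:=\log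 R-\log\rho-V(F-p)$. For $Q_{ij}=(e_i-e_j)(e_i-e_j)^T$ and $x\in\mathbb{R}^{|E|}$, $\|x\|_{(i,j)}^2=x^TB^TL^\dagger Q_{ij}L^\dagger Bx$. $\Omega_{\max}$ is the maximal effective resistance $(e_i-e_j)^TL^\dagger(e_i-e_j)$, $E_{\max}=\max_{i,j}|E_{ij}|$ with $E_{ij}$ the set of edges on at least one simple path from $i$ to $j$. $C_{n,\delta}$ is a parameter. *)

theory Defs
  imports "HOL-Probability.Probability"
begin

definition verts :: "nat \<Rightarrow> nat set" where
  "verts n = {1..n}"

(* E is an oriented simple graph on {1..n}: each undirected edge appears with exactly one orientation *)
definition oriented_graph :: "nat \<Rightarrow> (nat \<times> nat) set \<Rightarrow> bool" where
  "oriented_graph n E \<longleftrightarrow> finite E \<and>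
     (\<forall>(i,j)\<in>E. i \<in> verts n \<and> j \<in> verts n \<and> i \<noteq> j \<and> (j,i) \<notin> E)"

definition adj :: "(nat \<times> nat) set \<Rightarrow> nat \<Rightarrow> nat \<Rightarrow> bool" where
  "adj E u v \<longleftrightarrow> (u,v) \<in> E \<or> (v,u) \<in> E"

definition connected_graph :: "nat \<Rightarrow> (nat \<times> nat) set \<Rightarrow> bool" where
  "connected_graph n E \<longleftrightarrow>
     (\<forall>u\<in>verts n. \<forall>v\<in>verts n. (u,v) \<in> {(x,y). adj E x y}\<^sup>*)"

definition incidence :: "(nat \<times> nat) set \<Rightarrow> nat \<Rightarrow> nat \<times> nat \<Rightarrow> real" where
  "incidence E v e = (if e \<in> E then (if v = fst e then 1 else if v = snd e then -1 else 0) else 0)"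

definition laplacian :: "nat \<Rightarrow> (nat \<times> nat) set \<Rightarrow> nat \<Rightarrow> nat \<Rightarrow> real" where
  "laplacian n E u v = (\<Sum>e\<in>E. incidence E u e * incidence E v e)"

definition matmul :: "'a set \<Rightarrow> ('a \<Rightarrow> 'a \<Rightarrow> real) \<Rightarrow> ('a \<Rightarrow> 'a \<Rightarrow> real) \<Rightarrow> 'a \<Rightarrow> 'a \<Rightarrow> real" where
  "matmul S A C = (\<lambda>i j. \<Sum>k\<in>S. A i k * C k j)"

(* the four Moore--Penrose conditions for a square matrix indexed by S *)
definition is_pinv :: "'a set \<Rightarrow> ('a \<Rightarrow> 'a \<Rightarrow> real) \<Rightarrow> ('a \<Rightarrow> 'a \<Rightarrow> real) \<Rightarrow> bool" where
  "is_pinv S A X \<longleftrightarrow>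
     (\<forall>i j. i \<notin> S \<or> j \<notin> S \<longrightarrow> X i j = 0) \<and>
     (\<forall>i\<in>S. \<forall>j\<in>S. matmul S (matmul S A X) A i j = A i j) \<and>
     (\<forall>i\<in>S. \<forall>j\<in>S. matmul S (matmul S X A) X i j = X i j) \<and>
     (\<forall>i\<in>S. \<forall>j\<in>S. matmul S A X i j = matmul S A X j i) \<and>
     (\<forall>i\<in>S. \<forall>j\<in>S. matmul S X A i j = matmul S X A j i)"

definition pinv :: "'a set \<Rightarrow> ('a \<Rightarrow> 'a \<Rightarrow> real) \<Rightarrow> 'a \<Rightarrow> 'a \<Rightarrow> real" where
  "pinv S A = (THE X. is_pinv S A X)"

definition Lpinv :: "nat \<Rightarrow> (nat \<times> nat) set \<Rightarrow> nat \<Rightarrow> nat \<Rightarrow> real" where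
  "Lpinv n E = pinv (verts n) (laplacian n E)"

definition Bmul :: "(nat \<times> nat) set \<Rightarrow> (nat \<times> nat \<Rightarrow> real) \<Rightarrow> nat \<Rightarrow> real" where
  "Bmul E x v = (\<Sum>e\<in>E. incidence E v e * x e)"

definition log_What :: "nat \<Rightarrow> (nat \<times> nat) set \<Rightarrow> (nat \<times> nat \<Rightarrow> real) \<Rightarrow> nat \<Rightarrow> real" where
  "log_What n E logR i = (\<Sum>v\<in>verts n. Lpinv n E i v * Bmul E logR v)"

definition unitdiff :: "nat \<Rightarrow> nat \<Rightarrow> nat \<Rightarrow> real" where
  "unitdiff i j a = (if a = i then 1 else 0) - (if a = j then 1 else 0)"

definition Qmat :: "nat \<Rightarrow> nat \<Rightarrow> nat \<Rightarrow> nat \<Rightarrow> real" where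
  "Qmat i j a c = unitdiff i j a * unitdiff i j c"

(* ||x||_(i,j)^2 = x^T B^T L^+ Q_ij L^+ B x *)
definition sqnorm_ij :: "nat \<Rightarrow> (nat \<times> nat) set \<Rightarrow> nat \<Rightarrow> nat \<Rightarrow> (nat \<times> nat \<Rightarrow> real) \<Rightarrow> real" where
  "sqnorm_ij n E i j x =
     (let Bx = Bmul E x;
          z = (\<lambda>a. \<Sum>c\<in>verts n. Bx c * Lpinv n E c a);
          y = (\<lambda>a. \<Sum>c\<in>verts n. Lpinv n E a c * Bx c)
      in \<Sum>a\<in>verts n. \<Sum>c\<in>verts n. z a * Qmat i j a c * y c)"

definition eff_res :: "nat \<Rightarrow> (nat \<times> nat) set \<Rightarrow> nat \<Rightarrow> nat \<Rightarrow> real" where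
  "eff_res n E i j = (\<Sum>a\<in>verts n. \<Sum>c\<in>verts n. unitdiff i j a * Lpinv n E a c * unitdiff i j c)"

definition Omega_max :: "nat \<Rightarrow> (nat \<times> nat) set \<Rightarrow> real" where
  "Omega_max n E = Max {eff_res n E i j | i j. i \<in> verts n \<and> j \<in> verts n}"

definition simple_path :: "(nat \<times> nat) set \<Rightarrow> nat \<Rightarrow> nat \<Rightarrow> nat list \<Rightarrow> bool" where
  "simple_path E i j ps \<longleftrightarrow> ps \<noteq> [] \<and> hd ps = i \<and> last ps = j \<and> distinct ps \<and>
     (\<forall>m. Suc m < length ps \<longrightarrow> adj E (ps ! m) (ps ! Suc m))"

definition edge_on_path :: "nat \<times> nat \<Rightarrow> nat list \<Rightarrow> bool" where
  "edge_on_path e ps \<longleftrightarrow> (\<exists>m. Suc m < length ps \<and>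
     ((ps ! m, ps ! Suc m) = e \<or> (ps ! Suc m, ps ! m) = e))"

definition path_edges :: "(nat \<times> nat) set \<Rightarrow> nat \<Rightarrow> nat \<Rightarrow> (nat \<times> nat) set" where
  "path_edges E i j = {e \<in> E. \<exists>ps. simple_path E i j ps \<and> edge_on_path e ps}"

definition E_max :: "nat \<Rightarrow> (nat \<times> nat) set \<Rightarrow> nat" where
  "E_max n E = Max {card (path_edges E i j) | i j. i \<in> verts n \<and> j \<in> verts n}"

definition pe :: "(nat \<Rightarrow> real) \<Rightarrow> nat \<times> nat \<Rightarrow> real" where
  "pe w e = w (fst e) / (w (fst e) + w (snd e))"

definition rho :: "(nat \<Rightarrow> real) \<Rightarrow> nat \<times> nat \<Rightarrow> real" where
  "rho w e = w (fst e) / w (snd e)"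

definition vv :: "(nat \<Rightarrow> real) \<Rightarrow> nat \<times> nat \<Rightarrow> real" where
  "vv w e = rho w e + 2 + 1 / rho w e"

(* X e = number of the k comparisons on edge e won by fst e *)
definition Fr :: "nat \<Rightarrow> (nat \<times> nat \<Rightarrow> nat) \<Rightarrow> nat \<times> nat \<Rightarrow> real" where
  "Fr k X e = real (X e) / real k"

definition Rr :: "nat \<Rightarrow> (nat \<times> nat \<Rightarrow> nat) \<Rightarrow> nat \<times> nat \<Rightarrow> real" where
  "Rr k X e = Fr k X e / (1 - Fr k X e)"

definition VFp :: "(nat \<Rightarrow> real) \<Rightarrow> nat \<Rightarrow> (nat \<times> nat \<Rightarrow> nat) \<Rightarrow> nat \<times> nat \<Rightarrow> real" where
  "VFp w k X e = vv w e * (Fr k X e - pe w e)"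

definition Delta :: "(nat \<Rightarrow> real) \<Rightarrow> nat \<Rightarrow> (nat \<times> nat \<Rightarrow> nat) \<Rightarrow> nat \<times> nat \<Rightarrow> real" where
  "Delta w k X e = ln (Rr k X e) - ln (rho w e) - VFp w k X e"

definition outcomes :: "(nat \<times> nat) set \<Rightarrow> (nat \<Rightarrow> real) \<Rightarrow> nat \<Rightarrow> (nat \<times> nat \<Rightarrow> nat) pmf" where
  "outcomes E w k = Pi_pmf E 0 (\<lambda>e. binomial_pmf k (pe w e))"

end

theory Submission
  imports Defs "Jordan_Normal_Form.Determinant"
begin

(* Since L^+ B log rho recovers log w up to an additive constant and the estimator is
   linear, its error is L^+ B (V (F - p) + Delta), and the first claim is
   (a + d)^2 <= 2 a^2 + 2 d^2.  For the second, Delta_e is the remainder of the first-order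
   Taylor expansion of logit x = ln x - ln (1 - x) at p_e, so |Delta_e| <= 4 t^2 / m^2
   whenever |F_e - p_e| <= t <= m / 2, where m = min p_e (1 - p_e) >= 1 / (2 b).  A Chernoff
   bound with variance proxy m gives |F_e - p_e| < 2 sqrt (m C / k) outside probability
   2 exp (-C); for this t the remainder is at most 32 b C / k, and the union bound over at most
   n^2 edges costs 2 n^2 exp (-C) <= delta once C >= 4 ln (n / delta).  The pseudoinverse of L
   exists because L + J (J the all-ones matrix) is invertible for a connected graph. *)

section \<open>Matrices indexed by a finite set\<close>

definition supported_on :: "'a set \<Rightarrow> ('a \<Rightarrow> 'a \<Rightarrow> real) \<Rightarrow> bool" where
  "supported_on S A \<longleftrightarrow> (\<forall>i j. i \<notin> S \<or> j \<notin> S \<longrightarrow> A i j = 0)"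

definition mtranspose :: "('a \<Rightarrow> 'a \<Rightarrow> real) \<Rightarrow> 'a \<Rightarrow> 'a \<Rightarrow> real" where
  "mtranspose A = (\<lambda>i j. A j i)"

definition matvec :: "'a set \<Rightarrow> ('a \<Rightarrow> 'a \<Rightarrow> real) \<Rightarrow> ('a \<Rightarrow> real) \<Rightarrow> 'a \<Rightarrow> real" where
  "matvec S A x = (\<lambda>i. \<Sum>j\<in>S. A i j * x j)"

definition is_inverse :: "'a set \<Rightarrow> ('a \<Rightarrow> 'a \<Rightarrow> real) \<Rightarrow> ('a \<Rightarrow> 'a \<Rightarrow> real) \<Rightarrow> bool" where
  "is_inverse S A N \<longleftrightarrow>
     (\<forall>i\<in>S. \<forall>j\<in>S. matmul S A N i j = of_bool (i = j) \<and> matmul S N A i j = of_bool (i = j))"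

lemma matmul_assoc:
  assumes "finite S"
  shows "matmul S (matmul S A B) C = matmul S A (matmul S B C)"
proof (intro ext)
  fix i j
  have "matmul S (matmul S A B) C i j = (\<Sum>k\<in>S. \<Sum>l\<in>S. A i l * B l k * C k j)"
    by (simp add: matmul_def sum_distrib_right)
  also have "\<dots> = (\<Sum>l\<in>S. \<Sum>k\<in>S. A i l * B l k * C k j)"
    by (rule sum.swap)
  also have "\<dots> = matmul S A (matmul S B C) i j"
    by (simp add: matmul_def sum_distrib_left mult.assoc)
  finally show "matmul S (matmul S A B) C i j = matmul S A (matmul S B C) i j" .
qed

lemma mtranspose_matmul: "mtranspose (matmul S A B) = matmul S (mtranspose B) (mtranspose A)"
  by (auto simp: mtranspose_def matmul_def mult.commute intro!: ext)

lemma matvec_matmul: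
  assumes "finite S"
  shows "matvec S (matmul S A B) x = matvec S A (matvec S B x)"
proof (intro ext)
  fix i
  have "matvec S (matmul S A B) x i = (\<Sum>j\<in>S. \<Sum>k\<in>S. A i k * B k j * x j)"
    by (simp add: matvec_def matmul_def sum_distrib_right)
  also have "\<dots> = (\<Sum>k\<in>S. \<Sum>j\<in>S. A i k * B k j * x j)"
    by (rule sum.swap)
  also have "\<dots> = matvec S A (matvec S B x) i"
    by (simp add: matvec_def sum_distrib_left mult.assoc)
  finally show "matvec S (matmul S A B) x i = matvec S A (matvec S B x) i" .
qed

lemma matvec_diff: "matvec S A (\<lambda>j. x j - y j) i = matvec S A x i - matvec S A y i"
  by (simp add: matvec_def right_diff_distrib sum_subtractf)

lemma supported_on_matmul: "supported_on S A \<Longrightarrow> supported_on S B \<Longrightarrow> supported_on S (matmul S A B)"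
  by (auto simp: supported_on_def matmul_def)

lemma supported_on_mtranspose: "supported_on S A \<Longrightarrow> supported_on S (mtranspose A)"
  by (auto simp: supported_on_def mtranspose_def)

lemma supported_on_eqI:
  assumes "supported_on S A" "supported_on S B" "\<And>i j. i \<in> S \<Longrightarrow> j \<in> S \<Longrightarrow> A i j = B i j"
  shows "A = B"
proof (intro ext)
  fix i j
  show "A i j = B i j"
    using assms by (cases "i \<in> S \<and> j \<in> S") (auto simp: supported_on_def)
qed

lemma is_pinv_iff:
  assumes sA: "supported_on S A"
  shows "is_pinv S A X \<longleftrightarrow> supported_on S X \<and>
    matmul S (matmul S A X) A = A \<and> matmul S (matmul S X A) X = X \<and>
    mtranspose (matmul S A X) = matmul S A X \<and> mtranspose (matmul S X A) = matmul S X A"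
    (is "_ \<longleftrightarrow> ?sX \<and> ?AXA \<and> ?XAX \<and> ?AX \<and> ?XA")
proof
  assume X: "is_pinv S A X"
  then have sX: ?sX by (simp add: is_pinv_def supported_on_def)
  have sAX: "supported_on S (matmul S A X)" and sXA: "supported_on S (matmul S X A)"
    using sA sX by (auto intro: supported_on_matmul)
  have ?AXA
    by (rule supported_on_eqI[of S])
      (use X sA sAX in \<open>auto simp: is_pinv_def intro: supported_on_matmul\<close>)
  moreover have ?XAX
    by (rule supported_on_eqI[of S])
      (use X sX sXA in \<open>auto simp: is_pinv_def intro: supported_on_matmul\<close>)
  moreover have ?AX
    by (rule supported_on_eqI[of S])
      (use X sAX supported_on_mtranspose[OF sAX] in \<open>auto simp: is_pinv_def mtranspose_def\<close>)
  moreover have ?XA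
    by (rule supported_on_eqI[of S])
      (use X sXA supported_on_mtranspose[OF sXA] in \<open>auto simp: is_pinv_def mtranspose_def\<close>)
  ultimately show "?sX \<and> ?AXA \<and> ?XAX \<and> ?AX \<and> ?XA" using sX by blast
next
  assume "?sX \<and> ?AXA \<and> ?XAX \<and> ?AX \<and> ?XA"
  then have "?sX" "?AXA" "?XAX"
    and "\<And>i j. matmul S A X j i = matmul S A X i j" "\<And>i j. matmul S X A j i = matmul S X A i j"
    by (auto simp: mtranspose_def fun_eq_iff)
  then show "is_pinv S A X"
    by (auto simp: is_pinv_def supported_on_def)
qed

lemma is_pinv_products:
  assumes fin: "finite S" and sA: "supported_on S A" and X: "is_pinv S A X" and Y: "is_pinv S A Y"
  shows "matmul S (matmul S A X) (matmul S A Y) = matmul S A X"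
    and "matmul S (matmul S X A) (matmul S Y A) = matmul S Y A"
proof -
  let ?m = "matmul S" and ?t = mtranspose
  note assoc = matmul_assoc[OF fin]
  have AXA: "?m (?m A X) A = A"
    and AX: "?m A X = ?m (?t X) (?t A)" and XA: "?m X A = ?m (?t A) (?t X)"
    using X[unfolded is_pinv_iff[OF sA]] by (simp_all add: mtranspose_matmul)
  have AYA: "?m (?m A Y) A = A"
    and AY: "?m A Y = ?m (?t Y) (?t A)" and YA: "?m Y A = ?m (?t A) (?t Y)"
    using Y[unfolded is_pinv_iff[OF sA]] by (simp_all add: mtranspose_matmul)
  have "?m (?t A) (?m (?t Y) (?t A)) = ?t A"
    using arg_cong[OF AYA, of ?t] by (simp add: mtranspose_matmul)
  then show "?m (?m A X) (?m A Y) = ?m A X"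
    by (simp add: AX AY assoc)
  have "?m (?m (?t A) (?t X)) (?t A) = ?t A"
    using arg_cong[OF AXA, of ?t] by (simp add: mtranspose_matmul assoc)
  then show "?m (?m X A) (?m Y A) = ?m Y A"
    by (simp add: XA YA flip: assoc)
qed

lemma is_pinv_unique:
  assumes fin: "finite S" and sA: "supported_on S A" and X: "is_pinv S A X" and Y: "is_pinv S A Y"
  shows "X = Y"
proof -
  let ?m = "matmul S"
  note assoc = matmul_assoc[OF fin] and prods = is_pinv_products[OF fin sA X Y]
  have XAX: "?m X (?m A X) = X" and YAY: "?m (?m Y A) Y = Y"
    using X Y by (simp_all add: is_pinv_iff[OF sA] assoc)
  have "X = ?m X (?m (?m A X) (?m A Y))"
    using XAX prods(1) by simp
  also have "\<dots> = ?m (?m X (?m A X)) (?m A Y)"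
    by (simp add: assoc)
  also have "\<dots> = ?m X (?m A Y)"
    using XAX by simp
  finally have X_eq: "X = ?m X (?m A Y)" .
  have "Y = ?m (?m (?m X A) (?m Y A)) Y"
    using YAY prods(2) by simp
  also have "\<dots> = ?m (?m X A) (?m (?m Y A) Y)"
    by (simp add: assoc)
  also have "\<dots> = ?m (?m X A) Y"
    using YAY by simp
  finally have "Y = ?m X (?m A Y)"
    by (simp add: assoc)
  with X_eq show ?thesis by simp
qed

lemma is_pinv_mtranspose:
  assumes fin: "finite S" and sA: "supported_on S A" and sym: "mtranspose A = A"
    and X: "is_pinv S A X"
  shows "is_pinv S A (mtranspose X)"
proof -
  let ?m = "matmul S" and ?t = mtranspose
  note x = X[unfolded is_pinv_iff[OF sA]]
  have AtX: "?m A (?t X) = ?m X A" and tXA: "?m (?t X) A = ?m A X"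
    using x by (simp_all add: mtranspose_matmul sym)
  have "?m (?m A (?t X)) A = ?t (?m (?m A X) A)"
    using sym by (simp add: mtranspose_matmul matmul_assoc[OF fin])
  then have "?m (?m A (?t X)) A = A"
    using x sym by simp
  moreover have "?m (?m (?t X) A) (?t X) = ?t (?m (?m X A) X)"
    using sym by (simp add: mtranspose_matmul matmul_assoc[OF fin])
  then have "?m (?m (?t X) A) (?t X) = ?t X"
    using x by simp
  ultimately show ?thesis
    using x by (simp add: is_pinv_iff[OF sA] supported_on_mtranspose AtX tXA)
qed

lemma pinv_eqI:
  assumes fin: "finite S" and sA: "supported_on S A" and X: "is_pinv S A X"
  shows "pinv S A = X"
  unfolding pinv_def
proof (rule the_equality)
  show "is_pinv S A X" by (fact X)
  show "Y = X" if "is_pinv S A Y" for Y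
    using is_pinv_unique[OF fin sA that X] .
qed

lemma pinv_symmetric:
  assumes fin: "finite S" and sA: "supported_on S A" and sym: "mtranspose A = A"
    and X: "is_pinv S A X"
  shows "pinv S A i j = pinv S A j i"
proof -
  have "pinv S A i j = X i j"
    by (simp only: pinv_eqI[OF fin sA X])
  also have "\<dots> = mtranspose X j i"
    by (simp only: mtranspose_def)
  also have "\<dots> = pinv S A j i"
    by (simp only: pinv_eqI[OF fin sA is_pinv_mtranspose[OF fin sA sym X]])
  finally show ?thesis .
qed

definition mat_of_fun :: "nat \<Rightarrow> (nat \<Rightarrow> nat \<Rightarrow> real) \<Rightarrow> real mat" where
  "mat_of_fun n M = mat n n (\<lambda>(i, j). M (Suc i) (Suc j))"

lemma sum_atLeast1_atMost_shift: "(\<Sum>k\<in>{1..n}. f k) = (\<Sum>k<n. f (Suc k))"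
  using sum.atLeast1_atMost_eq[of f n] by simp

lemma matvec_mat_of_fun:
  assumes "i \<in> {1..n}"
  shows "matvec {1..n} M x i = (mat_of_fun n M *\<^sub>v vec n (\<lambda>k. x (Suc k))) $ (i - 1)"
  unfolding matvec_def sum_atLeast1_atMost_shift using assms
  by (auto simp: mat_of_fun_def scalar_prod_def lessThan_atLeast0 intro!: sum.cong)

lemma matmul_mat_of_fun:
  assumes "i \<in> {1..n}" "j \<in> {1..n}"
  shows "matmul {1..n} M N i j = (mat_of_fun n M * mat_of_fun n N) $$ (i - 1, j - 1)"
  unfolding matmul_def sum_atLeast1_atMost_shift using assms
  by (auto simp: mat_of_fun_def scalar_prod_def lessThan_atLeast0 intro!: sum.cong)

lemma is_inverse_exists_if_injective:
  fixes M :: "nat \<Rightarrow> nat \<Rightarrow> real"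
  assumes inj: "\<And>x. \<forall>i\<in>{1..n}. matvec {1..n} M x i = 0 \<Longrightarrow> \<forall>i\<in>{1..n}. x i = 0"
  shows "\<exists>N. is_inverse {1..n} M N"
proof -
  let ?A = "mat_of_fun n M"
  have A: "?A \<in> carrier_mat n n" by (simp add: mat_of_fun_def)
  have "det ?A \<noteq> 0"
  proof
    assume "det ?A = 0"
    then obtain v where v: "v \<in> carrier_vec n" "v \<noteq> 0\<^sub>v n" "?A *\<^sub>v v = 0\<^sub>v n"
      using det_0_iff_vec_prod_zero[OF A] by blast
    define x where "x k = v $ (k - 1)" for k
    have "vec n (\<lambda>k. x (Suc k)) = v"
      using v(1) by (auto simp: x_def)
    have "\<forall>i\<in>{1..n}. x i = 0"
    proof (rule inj, rule ballI)
      fix i assume "i \<in> {1..n}"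
      then show "matvec {1..n} M x i = 0"
        using matvec_mat_of_fun[of i n M x] v(3) \<open>vec n (\<lambda>k. x (Suc k)) = v\<close> by auto
    qed
    then have "v $ i = 0" if "i < n" for i
      using that by (auto simp: x_def dest: bspec[of _ _ "Suc i"])
    then have "v = 0\<^sub>v n"
      using v(1) by (intro eq_vecI) auto
    with v(2) show False ..
  qed
  then have "?A \<in> Units (ring_mat TYPE(real) n ())"
    by (rule det_non_zero_imp_unit[OF A])
  then obtain B where B: "B \<in> carrier_mat n n" "B * ?A = 1\<^sub>m n" "?A * B = 1\<^sub>m n"
    by (auto simp: Units_def ring_mat_def)
  define N where "N i j = B $$ (i - 1, j - 1)" for i j
  have "mat_of_fun n N = B"
    using B(1) by (auto simp: mat_of_fun_def N_def)
  then have "matmul {1..n} M N i j = of_bool (i = j) \<and> matmul {1..n} N M i j = of_bool (i = j)"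
    if "i \<in> {1..n}" "j \<in> {1..n}" for i j
    using matmul_mat_of_fun[OF that, of M N] matmul_mat_of_fun[OF that, of N M] B that by auto
  then have "is_inverse {1..n} M N"
    unfolding is_inverse_def by blast
  then show ?thesis by blast
qed

lemma sum_of_bool_diff_mult:
  fixes c :: real
  assumes "finite S" "i \<in> S"
  shows "(\<Sum>k\<in>S. (of_bool (i = k) - c) * Y k) = Y i - c * (\<Sum>k\<in>S. Y k)"
proof -
  have "(\<Sum>k\<in>S. of_bool (i = k) * Y k) = (\<Sum>k\<in>S. if i = k then Y k else 0)"
    by (rule sum.cong) auto
  also have "\<dots> = Y i"
    using assms by simp
  finally show ?thesis
    by (simp add: left_diff_distrib sum_subtractf sum_distrib_left)
qed

lemma inverse_plus_ones_sums:
  assumes fin: "finite S"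
    and rows: "\<forall>i\<in>S. (\<Sum>j\<in>S. A i j) = 0" and cols: "\<forall>j\<in>S. (\<Sum>i\<in>S. A i j) = 0"
    and inv: "is_inverse S (\<lambda>i j. A i j + 1) N"
  shows "i \<in> S \<Longrightarrow> (\<Sum>k\<in>S. N i k) = 1 / real (card S)"
    and "j \<in> S \<Longrightarrow> (\<Sum>k\<in>S. N k j) = 1 / real (card S)"
proof -
  let ?M = "\<lambda>i j. A i j + 1" and ?c = "real (card S)"
  assume i: "i \<in> S"
  have "1 = (\<Sum>j\<in>S. matmul S N ?M i j)"
    using inv i fin by (simp add: is_inverse_def)
  also have "\<dots> = (\<Sum>k\<in>S. N i k * (\<Sum>j\<in>S. ?M k j))"
    unfolding matmul_def sum_distrib_left by (rule sum.swap)
  also have "\<dots> = (\<Sum>k\<in>S. N i k) * ?c"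
    using rows by (simp add: sum.distrib sum_distrib_right)
  moreover have "0 < ?c"
    using i fin by (auto simp: card_gt_0_iff)
  ultimately show "(\<Sum>k\<in>S. N i k) = 1 / ?c"
    by (simp add: field_simps)
next
  let ?M = "\<lambda>i j. A i j + 1" and ?c = "real (card S)"
  assume j: "j \<in> S"
  have "1 = (\<Sum>i\<in>S. matmul S ?M N i j)"
    using inv j fin by (simp add: is_inverse_def)
  also have "\<dots> = (\<Sum>k\<in>S. (\<Sum>i\<in>S. ?M i k) * N k j)"
    unfolding matmul_def sum_distrib_right by (rule sum.swap)
  also have "\<dots> = ?c * (\<Sum>k\<in>S. N k j)"
    using cols by (simp add: sum.distrib sum_distrib_left)
  moreover have "0 < ?c"
    using j fin by (auto simp: card_gt_0_iff)
  ultimately show "(\<Sum>k\<in>S. N k j) = 1 / ?c"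
    by (simp add: field_simps)
qed

text \<open>If the row and column sums of \<open>A\<close> vanish, then \<open>A + J\<close> (with \<open>J\<close> the all-ones matrix)
  acts as \<open>A\<close> on the vectors of zero sum and as multiplication by \<open>|S|\<close> on the constants;
  hence \<open>(A + J)\<^sup>-\<^sup>1 = A\<^sup>\<dagger> + J / |S|\<^sup>2\<close>.\<close>

lemma is_pinv_of_inverse_plus_ones:
  assumes fin: "finite S" and sA: "supported_on S A"
    and rows: "\<forall>i\<in>S. (\<Sum>j\<in>S. A i j) = 0" and cols: "\<forall>j\<in>S. (\<Sum>i\<in>S. A i j) = 0"
    and inv: "is_inverse S (\<lambda>i j. A i j + 1) N"
  shows "is_pinv S A (\<lambda>i j. if i \<in> S \<and> j \<in> S then N i j - 1 / (real (card S))\<^sup>2 else 0)"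
    (is "is_pinv S A ?X")
proof -
  let ?c = "real (card S)"
  note sums = inverse_plus_ones_sums[OF fin rows cols inv]
  have AX: "matmul S A ?X i j = of_bool (i = j) - 1 / ?c" if ij: "i \<in> S" "j \<in> S" for i j
  proof -
    have "matmul S A ?X i j = (\<Sum>k\<in>S. (A i k + 1) * N k j) - (\<Sum>k\<in>S. N k j)"
      using ij rows by (simp add: matmul_def distrib_right right_diff_distrib sum.distrib
          sum_subtractf flip: sum_divide_distrib)
    then show ?thesis using inv sums(2) ij by (simp add: is_inverse_def matmul_def)
  qed
  have XA: "matmul S ?X A i j = of_bool (i = j) - 1 / ?c" if ij: "i \<in> S" "j \<in> S" for i j
  proof -
    have "matmul S ?X A i j = (\<Sum>k\<in>S. N i k * (A k j + 1)) - (\<Sum>k\<in>S. N i k)"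
      using ij cols by (simp add: matmul_def distrib_left left_diff_distrib sum.distrib
          sum_subtractf flip: sum_divide_distrib)
    then show ?thesis using inv sums(1) ij by (simp add: is_inverse_def matmul_def)
  qed
  have col_X: "(\<Sum>k\<in>S. ?X k j) = 0" if "j \<in> S" for j
    using that sums(2)[OF that] fin by (simp add: sum_subtractf power2_eq_square)
  have "matmul S (matmul S A ?X) A i j = A i j" if ij: "i \<in> S" "j \<in> S" for i j
    using ij fin cols by (simp add: matmul_def[of S "matmul S A ?X"] AX sum_of_bool_diff_mult)
  moreover have "matmul S (matmul S ?X A) ?X i j = ?X i j" if ij: "i \<in> S" "j \<in> S" for i j
    using ij fin col_X by (simp add: matmul_def[of S "matmul S ?X A"] XA sum_of_bool_diff_mult)
  ultimately show ?thesis
    unfolding is_pinv_def by (auto simp: AX XA)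
qed

section \<open>The Laplacian of a connected graph and its pseudoinverse\<close>

lemma sum_unitdiff:
  assumes "finite S" "i \<in> S" "j \<in> S"
  shows "(\<Sum>v\<in>S. unitdiff i j v * x v) = x i - x j"
proof -
  have "unitdiff i j v * x v = (if v = i then x i else 0) - (if v = j then x j else 0)" for v
    by (simp add: unitdiff_def)
  then show ?thesis using assms by (simp add: sum_subtractf)
qed

lemma oriented_graph_finite: "oriented_graph n E \<Longrightarrow> finite E"
  by (simp add: oriented_graph_def)

lemma oriented_graph_edgeD:
  "oriented_graph n E \<Longrightarrow> e \<in> E \<Longrightarrow> fst e \<in> verts n \<and> snd e \<in> verts n \<and> fst e \<noteq> snd e"
  by (auto simp: oriented_graph_def)

lemma card_edges_le: "oriented_graph n E \<Longrightarrow> card E \<le> n\<^sup>2"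
proof -
  assume "oriented_graph n E"
  then have "E \<subseteq> verts n \<times> verts n" by (auto simp: oriented_graph_def)
  then have "card E \<le> card (verts n \<times> verts n)" by (intro card_mono) (auto simp: verts_def)
  then show ?thesis by (simp add: verts_def card_cartesian_product power2_eq_square)
qed

lemma incidence_edge: "oriented_graph n E \<Longrightarrow> e \<in> E \<Longrightarrow> incidence E v e = unitdiff (fst e) (snd e) v"
  using oriented_graph_edgeD[of n E e] by (auto simp: incidence_def unitdiff_def)

lemma sum_incidence_mult:
  "oriented_graph n E \<Longrightarrow> e \<in> E \<Longrightarrow> (\<Sum>v\<in>verts n. incidence E v e * x v) = x (fst e) - x (snd e)"
  using oriented_graph_edgeD[of n E e] by (simp add: incidence_edge sum_unitdiff verts_def)

lemma incidence_outside_verts: "oriented_graph n E \<Longrightarrow> v \<notin> verts n \<Longrightarrow> incidence E v e = 0"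
  using oriented_graph_edgeD[of n E e] by (auto simp: incidence_def)

lemma laplacian_supported: "oriented_graph n E \<Longrightarrow> supported_on (verts n) (laplacian n E)"
  by (auto simp: supported_on_def laplacian_def incidence_outside_verts)

lemma laplacian_symmetric: "mtranspose (laplacian n E) = laplacian n E"
  by (auto simp: mtranspose_def laplacian_def mult.commute intro!: ext)

lemma matvec_laplacian:
  assumes og: "oriented_graph n E"
  shows "matvec (verts n) (laplacian n E) x v = Bmul E (\<lambda>e. x (fst e) - x (snd e)) v"
proof -
  have "matvec (verts n) (laplacian n E) x v
      = (\<Sum>e\<in>E. \<Sum>u\<in>verts n. incidence E v e * (incidence E u e * x u))"
    by (simp add: matvec_def laplacian_def sum_distrib_right mult.assoc sum.swap[of _ E])
  also have "\<dots> = Bmul E (\<lambda>e. x (fst e) - x (snd e)) v"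
    unfolding Bmul_def
    by (rule sum.cong) (simp_all add: sum_distrib_left[symmetric] sum_incidence_mult[OF og])
  finally show ?thesis .
qed

lemma laplacian_row_sum: "oriented_graph n E \<Longrightarrow> (\<Sum>u\<in>verts n. laplacian n E v u) = 0"
  using matvec_laplacian[of n E "\<lambda>_. 1" v] by (simp add: matvec_def Bmul_def)

lemma laplacian_col_sum: "oriented_graph n E \<Longrightarrow> (\<Sum>u\<in>verts n. laplacian n E u v) = 0"
  using laplacian_row_sum[of n E v] by (simp add: laplacian_def mult.commute)

lemma laplacian_quadratic_form:
  assumes og: "oriented_graph n E"
  shows "(\<Sum>v\<in>verts n. x v * matvec (verts n) (laplacian n E) x v)
    = (\<Sum>e\<in>E. (x (fst e) - x (snd e))\<^sup>2)"
proof -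
  have "(\<Sum>v\<in>verts n. x v * matvec (verts n) (laplacian n E) x v)
     = (\<Sum>e\<in>E. \<Sum>v\<in>verts n. (incidence E v e * x v) * (x (fst e) - x (snd e)))"
    by (simp add: matvec_laplacian[OF og] Bmul_def sum_distrib_left mult_ac
        sum.swap[of _ "verts n"])
  also have "\<dots> = (\<Sum>e\<in>E. (x (fst e) - x (snd e))\<^sup>2)"
    by (rule sum.cong)
      (simp_all add: sum_distrib_right[symmetric] sum_incidence_mult[OF og] power2_eq_square)
  finally show ?thesis .
qed

lemma connected_graph_const:
  assumes cg: "connected_graph n E" and edges: "\<forall>e\<in>E. x (fst e) = x (snd e)"
    and ij: "i \<in> verts n" "j \<in> verts n"
  shows "x i = x j"
proof -
  have "(i, j) \<in> {(a, b). adj E a b}\<^sup>*" using cg ij by (auto simp: connected_graph_def)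
  then show ?thesis
  proof (induction rule: rtrancl_induct)
    case (step y z)
    then have "x y = x z" using edges unfolding adj_def by force
    then show ?case using step by simp
  qed simp
qed

lemma const_if_edge_energy_zero:
  fixes x :: "nat \<Rightarrow> real"
  assumes og: "oriented_graph n E" and cg: "connected_graph n E"
    and energy: "(\<Sum>e\<in>E. (x (fst e) - x (snd e))\<^sup>2) = 0" and ij: "i \<in> verts n" "j \<in> verts n"
  shows "x i = x j"
proof -
  have "\<forall>e\<in>E. (x (fst e) - x (snd e))\<^sup>2 = 0"
    using sum_nonneg_eq_0_iff[of E "\<lambda>e. (x (fst e) - x (snd e))\<^sup>2"] energy
      oriented_graph_finite[OF og] by simp
  then show ?thesis using connected_graph_const[OF cg _ ij] by simp
qed

lemma laplacian_kernel_const: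
  assumes og: "oriented_graph n E" and cg: "connected_graph n E"
    and ker: "\<forall>v\<in>verts n. matvec (verts n) (laplacian n E) x v = 0"
    and ij: "i \<in> verts n" "j \<in> verts n"
  shows "x i = x j"
  using const_if_edge_energy_zero[OF og cg _ ij] laplacian_quadratic_form[OF og, of x] ker by simp

lemma laplacian_plus_ones_injective:
  assumes og: "oriented_graph n E" and cg: "connected_graph n E" and n: "n \<ge> 1"
    and ker: "\<forall>v\<in>verts n. matvec (verts n) (\<lambda>i j. laplacian n E i j + 1) x v = 0"
  shows "\<forall>v\<in>verts n. x v = 0"
proof -
  let ?S = "verts n" and ?s = "\<Sum>k\<in>verts n. x k" and ?energy = "\<Sum>e\<in>E. (x (fst e) - x (snd e))\<^sup>2"
  have "0 = (\<Sum>v\<in>?S. x v * matvec ?S (\<lambda>i j. laplacian n E i j + 1) x v)"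
    using ker by simp
  also have "\<dots> = (\<Sum>v\<in>?S. x v * matvec ?S (laplacian n E) x v) + ?s\<^sup>2"
    by (simp add: matvec_def distrib_right sum.distrib distrib_left sum_distrib_right
        power2_eq_square)
  finally have "?energy + ?s\<^sup>2 = 0"
    by (simp add: laplacian_quadratic_form[OF og])
  moreover have "0 \<le> ?energy" and "0 \<le> ?s\<^sup>2" by (simp_all add: sum_nonneg)
  ultimately have energy: "?energy = 0" and "?s\<^sup>2 = 0" by linarith+
  then have sum: "?s = 0" by simp
  have one: "1 \<in> ?S" using n by (simp add: verts_def)
  have const: "x v = x 1" if "v \<in> ?S" for v
    using const_if_edge_energy_zero[OF og cg energy that one] .
  have "?s = (\<Sum>v\<in>?S. x 1)"
    by (rule sum.cong[OF refl]) (rule const)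
  then have x1: "x 1 = 0"
    using sum n by (simp add: verts_def)
  show ?thesis
  proof
    fix v assume "v \<in> ?S"
    from const[OF this] x1 show "x v = 0" by simp
  qed
qed

lemma Lpinv_is_pinv:
  assumes og: "oriented_graph n E" and cg: "connected_graph n E" and n: "n \<ge> 1"
  shows "is_pinv (verts n) (laplacian n E) (Lpinv n E)"
proof -
  have fin: "finite (verts n)" by (simp add: verts_def)
  obtain N where N: "is_inverse (verts n) (\<lambda>i j. laplacian n E i j + 1) N"
    using is_inverse_exists_if_injective[where n = n, folded verts_def,
        OF laplacian_plus_ones_injective[OF og cg n]] by blast
  have rows: "\<forall>i\<in>verts n. (\<Sum>j\<in>verts n. laplacian n E i j) = 0"
    and cols: "\<forall>j\<in>verts n. (\<Sum>i\<in>verts n. laplacian n E i j) = 0"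
    using laplacian_row_sum[OF og] laplacian_col_sum[OF og] by blast+
  note P = is_pinv_of_inverse_plus_ones[OF fin laplacian_supported[OF og] rows cols N]
  show ?thesis
    unfolding Lpinv_def pinv_eqI[OF fin laplacian_supported[OF og] P] by (rule P)
qed

lemma Lpinv_symmetric:
  assumes og: "oriented_graph n E" and cg: "connected_graph n E" and n: "n \<ge> 1"
  shows "Lpinv n E i j = Lpinv n E j i"
  using pinv_symmetric[OF _ laplacian_supported[OF og] laplacian_symmetric
      Lpinv_is_pinv[OF og cg n]]
  by (simp add: Lpinv_def verts_def)

lemma log_What_eq_matvec: "log_What n E f = matvec (verts n) (Lpinv n E) (Bmul E f)"
  by (simp add: log_What_def matvec_def fun_eq_iff)

lemma Bmul_add: "Bmul E (\<lambda>e. f e + g e) v = Bmul E f v + Bmul E g v"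
  by (simp add: Bmul_def distrib_left sum.distrib)

lemma Bmul_cong: "(\<And>e. e \<in> E \<Longrightarrow> f e = g e) \<Longrightarrow> Bmul E f = Bmul E g"
  by (simp add: Bmul_def fun_eq_iff)

lemma log_What_add: "log_What n E (\<lambda>e. f e + g e) i = log_What n E f i + log_What n E g i"
  by (simp add: log_What_def Bmul_add distrib_left sum.distrib)

text \<open>The estimator is exact on noiseless data: \<open>L\<^sup>\<dagger> B B\<^sup>T x\<close> differs from \<open>x\<close> by an element of
  \<open>ker L\<close>, i.e. by a constant.\<close>

lemma log_What_edge_differences:
  assumes og: "oriented_graph n E" and cg: "connected_graph n E" and n: "n \<ge> 1"
    and ij: "i \<in> verts n" "j \<in> verts n"
  shows "log_What n E (\<lambda>e. x (fst e) - x (snd e)) i - log_What n E (\<lambda>e. x (fst e) - x (snd e)) j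
    = x i - x j"
proof -
  let ?S = "verts n" and ?L = "laplacian n E" and ?P = "Lpinv n E"
  have fin: "finite ?S" by (simp add: verts_def)
  define y where "y = log_What n E (\<lambda>e. x (fst e) - x (snd e))"
  have "Bmul E (\<lambda>e. x (fst e) - x (snd e)) = matvec ?S ?L x"
    using matvec_laplacian[OF og] by (simp add: fun_eq_iff)
  then have y: "y = matvec ?S ?P (matvec ?S ?L x)"
    by (simp add: y_def log_What_eq_matvec)
  have "matvec ?S ?L (\<lambda>u. y u - x u) v = 0" if v: "v \<in> ?S" for v
  proof -
    have LPL: "matmul ?S (matmul ?S ?L ?P) ?L v u = ?L v u" if "u \<in> ?S" for u
      using Lpinv_is_pinv[OF og cg n] v that by (simp add: is_pinv_def)
    have "matvec ?S ?L y v = matvec ?S (matmul ?S (matmul ?S ?L ?P) ?L) x v"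
      by (simp add: y matvec_matmul[OF fin])
    also have "\<dots> = matvec ?S ?L x v"
      unfolding matvec_def by (rule sum.cong) (simp_all add: LPL)
    finally show ?thesis by (simp add: matvec_diff)
  qed
  then have "y i - x i = y j - x j"
    using laplacian_kernel_const[OF og cg _ ij, of "\<lambda>u. y u - x u"] by blast
  then show ?thesis by (simp add: y_def)
qed

lemma log_What_log_rho:
  assumes og: "oriented_graph n E" and cg: "connected_graph n E" and n: "n \<ge> 1"
    and w: "\<forall>i\<in>verts n. w i > 0" and ij: "i \<in> verts n" "j \<in> verts n"
  shows "log_What n E (\<lambda>e. ln (rho w e)) i - log_What n E (\<lambda>e. ln (rho w e)) j = ln (w i / w j)"
proof -
  have "Bmul E (\<lambda>e. ln (rho w e)) = Bmul E (\<lambda>e. ln (w (fst e)) - ln (w (snd e)))"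
  proof (rule Bmul_cong)
    fix e assume "e \<in> E"
    then have "w (fst e) > 0" "w (snd e) > 0" using oriented_graph_edgeD[OF og] w by auto
    then show "ln (rho w e) = ln (w (fst e)) - ln (w (snd e))" by (simp add: rho_def ln_div)
  qed
  moreover have "w i > 0" "w j > 0" using w ij by auto
  ultimately show ?thesis
    using log_What_edge_differences[OF og cg n ij, of "\<lambda>v. ln (w v)"]
    by (simp add: log_What_def ln_div)
qed

lemma sqnorm_ij_eq:
  assumes sym: "\<And>a c. Lpinv n E a c = Lpinv n E c a" and ij: "i \<in> verts n" "j \<in> verts n"
  shows "sqnorm_ij n E i j x = (log_What n E x i - log_What n E x j)\<^sup>2"
proof -
  define y where "y = log_What n E x"
  have fin: "finite (verts n)" by (simp add: verts_def)
  have "sqnorm_ij n E i j x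
      = (\<Sum>a\<in>verts n. \<Sum>c\<in>verts n. (unitdiff i j a * y a) * (unitdiff i j c * y c))"
    unfolding sqnorm_ij_def Let_def by (simp add: y_def log_What_def sym Qmat_def mult_ac)
  also have "\<dots> = (\<Sum>a\<in>verts n. unitdiff i j a * y a) * (\<Sum>c\<in>verts n. unitdiff i j c * y c)"
    by (simp add: sum_product)
  also have "\<dots> = (y i - y j)\<^sup>2"
    using fin ij by (simp add: sum_unitdiff power2_eq_square)
  finally show ?thesis by (simp add: y_def)
qed

lemma log_What_error_le:
  assumes og: "oriented_graph n E" and cg: "connected_graph n E" and n: "n \<ge> 1"
    and w: "\<forall>i\<in>verts n. w i > 0" and ij: "i \<in> verts n" "j \<in> verts n"
  shows "(log_What n E (\<lambda>e. ln (Rr k X e)) i - log_What n E (\<lambda>e. ln (Rr k X e)) j - ln (w i / w j))\<^sup>2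
     \<le> 2 * sqnorm_ij n E i j (VFp w k X) + 2 * sqnorm_ij n E i j (Delta w k X)"
proof -
  define a where "a = log_What n E (VFp w k X) i - log_What n E (VFp w k X) j"
  define d where "d = log_What n E (Delta w k X) i - log_What n E (Delta w k X) j"
  have "(\<lambda>e. ln (Rr k X e)) = (\<lambda>e. ln (rho w e) + (VFp w k X e + Delta w k X e))"
    by (simp add: Delta_def)
  then have "log_What n E (\<lambda>e. ln (Rr k X e)) i - log_What n E (\<lambda>e. ln (Rr k X e)) j - ln (w i / w j)
      = a + d"
    using log_What_log_rho[OF og cg n w ij] by (simp add: log_What_add a_def d_def)
  moreover have "sqnorm_ij n E i j (VFp w k X) = a\<^sup>2" "sqnorm_ij n E i j (Delta w k X) = d\<^sup>2"
    using sqnorm_ij_eq[OF Lpinv_symmetric[OF og cg n] ij] by (simp_all add: a_def d_def)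
  moreover have "(a + d)\<^sup>2 \<le> 2 * a\<^sup>2 + 2 * d\<^sup>2"
    using zero_le_power2[of "a - d"] unfolding power2_sum power2_diff by linarith
  ultimately show ?thesis by simp
qed

section \<open>Chernoff bounds for the binomial distribution\<close>

lemma exp_le_one_plus_self_plus_sq:
  fixes x :: real
  assumes "\<bar>x\<bar> \<le> 1"
  shows "exp x \<le> 1 + x + x\<^sup>2"
proof (cases "x \<ge> 0")
  case True
  then show ?thesis using assms by (intro exp_bound) auto
next
  case False
  have "1 \<le> 1 - x ^ 3" using False by (simp add: power_less_zero_eq)
  also have "\<dots> = (1 - x) * (1 + x + x\<^sup>2)"
    by (simp add: algebra_simps power2_eq_square power3_eq_cube)
  finally have "inverse (1 - x) \<le> 1 + x + x\<^sup>2" using False by (simp add: field_simps)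
  moreover have "exp x \<le> inverse (1 - x)"
  proof -
    have "exp x = inverse (exp (- x))" by (simp add: exp_minus)
    also have "\<dots> \<le> inverse (1 - x)"
      using exp_ge_add_one_self[of "- x"] False by (intro le_imp_inverse_le) auto
    finally show ?thesis .
  qed
  ultimately show ?thesis by linarith
qed

text \<open>Expanding around the smaller of \<open>p\<close> and \<open>1 - p\<close> gives the variance proxy
  \<open>min p (1 - p)\<close> instead of Hoeffding's \<open>1/4\<close>; this keeps the final bound on \<open>\<Delta>\<close> linear in \<open>b\<close>.\<close>

lemma bernoulli_mgf_le:
  fixes p \<mu> :: real
  assumes p: "0 \<le> p" "p \<le> 1" and \<mu>: "\<bar>\<mu>\<bar> \<le> 1"
  shows "1 - p + p * exp \<mu> \<le> exp (p * \<mu> + min p (1 - p) * \<mu>\<^sup>2)"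
proof (cases "p \<le> 1 - p")
  case True
  have "1 - p + p * exp \<mu> = 1 + p * (exp \<mu> - 1)" by (simp add: algebra_simps)
  also have "\<dots> \<le> exp (p * (exp \<mu> - 1))" by (rule exp_ge_add_one_self)
  also have "\<dots> \<le> exp (p * (\<mu> + \<mu>\<^sup>2))"
    using exp_le_one_plus_self_plus_sq[OF \<mu>] p by (simp add: mult_left_mono)
  finally show ?thesis using True by (simp add: min_def algebra_simps)
next
  case False
  have "1 - p + p * exp \<mu> = exp \<mu> * (1 + (1 - p) * (exp (- \<mu>) - 1))"
    by (simp add: algebra_simps exp_minus)
  also have "\<dots> \<le> exp \<mu> * exp ((1 - p) * (exp (- \<mu>) - 1))"
    by (intro mult_left_mono exp_ge_add_one_self) simp
  also have "\<dots> \<le> exp \<mu> * exp ((1 - p) * (- \<mu> + \<mu>\<^sup>2))"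
    using exp_le_one_plus_self_plus_sq[of "- \<mu>"] \<mu> p by (simp add: mult_left_mono)
  also have "\<dots> = exp (p * \<mu> + (1 - p) * \<mu>\<^sup>2)" by (simp add: exp_add[symmetric] algebra_simps)
  finally show ?thesis using False by (simp add: min_def)
qed

lemma expectation_exp_binomial_pmf:
  assumes "p \<in> {0..1}"
  shows "measure_pmf.expectation (binomial_pmf k p) (\<lambda>x. exp (s * real x))
    = (1 - p + p * exp s) ^ k"
proof -
  have "measure_pmf.expectation (binomial_pmf k p) (\<lambda>x. exp (s * real x))
      = (\<Sum>x\<le>k. real (k choose x) * p ^ x * (1 - p) ^ (k - x) * exp (s * real x))"
    using assms by (simp add: expectation_binomial_pmf')
  also have "\<dots> = (\<Sum>x\<le>k. real (k choose x) * (p * exp s) ^ x * (1 - p) ^ (k - x))"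
  proof (rule sum.cong)
    fix x
    have "exp (s * real x) = exp s ^ x"
      by (simp add: exp_of_nat_mult[symmetric] mult.commute)
    then show "real (k choose x) * p ^ x * (1 - p) ^ (k - x) * exp (s * real x)
        = real (k choose x) * (p * exp s) ^ x * (1 - p) ^ (k - x)"
      by (simp add: power_mult_distrib)
  qed simp
  also have "\<dots> = (p * exp s + (1 - p)) ^ k"
    by (simp add: binomial_ring)
  finally show ?thesis by (simp add: add.commute)
qed

lemma binomial_upper_tail:
  fixes p l :: real
  assumes p: "0 \<le> p" "p \<le> 1" and l: "0 \<le> l" "l \<le> 1"
  shows "measure_pmf.prob (binomial_pmf k p) {x. real k * (p + 2 * min p (1 - p) * l) \<le> real x}
           \<le> exp (- real k * min p (1 - p) * l\<^sup>2)"
proof (cases "l = 0")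
  case True
  then show ?thesis by simp
next
  case False
  let ?M = "binomial_pmf k p" and ?m = "min p (1 - p)"
  let ?a = "real k * (p + 2 * min p (1 - p) * l)"
  have "measure_pmf.prob ?M {x. ?a \<le> real x}
      \<le> exp (- l * ?a) * measure_pmf.expectation ?M (\<lambda>x. exp (l * real x))"
    using measure_pmf.Chernoff_ineq_ge[of l ?M "space ?M" "\<lambda>x. real x" ?a] False l p
    by (simp add: set_lebesgue_integral_def set_integrable_def)
  also have "\<dots> \<le> exp (- l * ?a) * exp (p * l + ?m * l\<^sup>2) ^ k"
    using p l
    by (auto simp: expectation_exp_binomial_pmf intro!: mult_left_mono power_mono bernoulli_mgf_le)
  also have "\<dots> = exp (- real k * ?m * l\<^sup>2)"
    by (simp add: exp_of_nat_mult[symmetric] exp_add[symmetric] algebra_simps power2_eq_square)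
  finally show ?thesis .
qed

lemma binomial_lower_tail:
  fixes p l :: real
  assumes p: "0 \<le> p" "p \<le> 1" and l: "0 \<le> l" "l \<le> 1"
  shows "measure_pmf.prob (binomial_pmf k p) {x. real x \<le> real k * (p - 2 * min p (1 - p) * l)}
           \<le> exp (- real k * min p (1 - p) * l\<^sup>2)"
proof (cases "l = 0")
  case True
  then show ?thesis by simp
next
  case False
  let ?M = "binomial_pmf k p" and ?m = "min p (1 - p)"
  let ?a = "real k * (p - 2 * min p (1 - p) * l)"
  have "measure_pmf.prob ?M {x. real x \<le> ?a}
      \<le> exp (l * ?a) * measure_pmf.expectation ?M (\<lambda>x. exp (- l * real x))"
    using measure_pmf.Chernoff_ineq_le[of l ?M "space ?M" "\<lambda>x. real x" ?a] False l p
    by (simp add: set_lebesgue_integral_def set_integrable_def)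
  also have "\<dots> = exp (l * ?a) * (1 - p + p * exp (- l)) ^ k"
    using p by (subst expectation_exp_binomial_pmf) auto
  also have "\<dots> \<le> exp (l * ?a) * exp (p * (- l) + ?m * (- l)\<^sup>2) ^ k"
    using p l by (intro mult_left_mono power_mono bernoulli_mgf_le) auto
  also have "\<dots> = exp (- real k * ?m * l\<^sup>2)"
    by (simp add: exp_of_nat_mult[symmetric] exp_add[symmetric] algebra_simps power2_eq_square)
  finally show ?thesis .
qed

lemma binomial_deviation:
  fixes p t :: real
  assumes p: "0 < p" "p < 1" and t: "0 \<le> t" "t \<le> 2 * min p (1 - p)"
  shows "measure_pmf.prob (binomial_pmf k p) {x. real k * t \<le> \<bar>real x - real k * p\<bar>}
           \<le> 2 * exp (- real k * t\<^sup>2 / (4 * min p (1 - p)))"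
proof -
  let ?M = "binomial_pmf k p" and ?m = "min p (1 - p)"
  define l where "l = t / (2 * ?m)"
  have m: "0 < ?m" using p by simp
  have l: "0 \<le> l" "l \<le> 1" and t_eq: "t = 2 * ?m * l" using t m by (auto simp: l_def field_simps)
  have exponent: "real k * ?m * l\<^sup>2 = real k * t\<^sup>2 / (4 * ?m)"
    using m by (simp add: t_eq field_simps power2_eq_square)
  have "{x. real k * t \<le> \<bar>real x - real k * p\<bar>}
      \<subseteq> {x. real k * (p + 2 * ?m * l) \<le> real x} \<union> {x. real x \<le> real k * (p - 2 * ?m * l)}"
    by (auto simp: t_eq algebra_simps abs_le_iff not_le)
  then have "measure_pmf.prob ?M {x. real k * t \<le> \<bar>real x - real k * p\<bar>}
      \<le> measure_pmf.prob ?M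
          ({x. real k * (p + 2 * ?m * l) \<le> real x} \<union> {x. real x \<le> real k * (p - 2 * ?m * l)})"
    by (rule measure_pmf.finite_measure_mono) simp
  also have "\<dots> \<le> measure_pmf.prob ?M {x. real k * (p + 2 * ?m * l) \<le> real x}
        + measure_pmf.prob ?M {x. real x \<le> real k * (p - 2 * ?m * l)}"
    by (rule measure_Un_le) simp_all
  also have "\<dots> \<le> 2 * exp (- real k * ?m * l\<^sup>2)"
    using binomial_upper_tail[of p l k] binomial_lower_tail[of p l k] p l by simp
  finally show ?thesis by (simp add: exponent)
qed

lemma prob_outcomes_component:
  assumes "finite E" "e \<in> E"
  shows "measure_pmf.prob (outcomes E w k) {X. P (X e)}
    = measure_pmf.prob (binomial_pmf k (pe w e)) {x. P x}"
proof -
  have "binomial_pmf k (pe w e) = map_pmf (\<lambda>X. X e) (outcomes E w k)"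
    using assms by (simp add: outcomes_def Pi_pmf_component)
  then show ?thesis by (simp add: vimage_def)
qed

lemma prob_Fr_deviation:
  assumes E: "finite E" "e \<in> E" and p: "0 < pe w e" "pe w e < 1" and k: "0 < k"
    and t: "0 \<le> t" "t \<le> 2 * min (pe w e) (1 - pe w e)"
  shows "measure_pmf.prob (outcomes E w k) {X. t \<le> \<bar>Fr k X e - pe w e\<bar>}
           \<le> 2 * exp (- real k * t\<^sup>2 / (4 * min (pe w e) (1 - pe w e)))"
proof -
  have "t \<le> \<bar>real x / real k - pe w e\<bar> \<longleftrightarrow> real k * t \<le> \<bar>real x - real k * pe w e\<bar>" for x
  proof -
    have "\<bar>real x / real k - pe w e\<bar> = \<bar>real x - real k * pe w e\<bar> / real k"
      using k by (simp add: field_simps)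
    then show ?thesis using k by (simp add: field_simps)
  qed
  then show ?thesis
    using prob_outcomes_component[OF E, where w = w and k = k
        and P = "\<lambda>x. real k * t \<le> \<bar>real x - real k * pe w e\<bar>"]
      binomial_deviation[OF p t, of k]
    by (simp add: Fr_def)
qed

section \<open>Bounds for a single edge\<close>

definition logit :: "real \<Rightarrow> real" where
  "logit x = ln x - ln (1 - x)"

lemma ln_linearization:
  fixes F p :: real
  assumes p: "0 < p" and F: "\<bar>F - p\<bar> \<le> p / 2"
  shows "\<bar>ln F - ln p - (F - p) / p\<bar> \<le> 2 * ((F - p) / p)\<^sup>2"
proof -
  define u where "u = (F - p) / p"
  have u: "\<bar>u\<bar> \<le> 1 / 2"
    using F p by (simp add: u_def abs_divide divide_le_eq)
  have "ln F - ln p = ln (1 + u)"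
  proof -
    have "F = p * (1 + u)" using p by (simp add: u_def field_simps)
    moreover have "0 < 1 + u" using u by linarith
    ultimately show ?thesis using p by (simp add: ln_mult)
  qed
  then show ?thesis
    using abs_ln_one_plus_x_minus_x_bound[OF u] by (simp add: u_def)
qed

lemma logit_linearization:
  fixes F p t :: real
  assumes p: "0 < p" "p < 1" and t: "t \<le> min p (1 - p) / 2" and F: "\<bar>F - p\<bar> \<le> t"
  shows "\<bar>logit F - logit p - (1 / p + 1 / (1 - p)) * (F - p)\<bar> \<le> 4 * t\<^sup>2 / (min p (1 - p))\<^sup>2"
proof -
  let ?m = "min p (1 - p)"
  have m: "0 < ?m" using p by simp
  have sq: "(d / q)\<^sup>2 \<le> (t / ?m)\<^sup>2" if "\<bar>d\<bar> \<le> t" "?m \<le> q" for d q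
  proof -
    have "\<bar>d\<bar> / q \<le> t / ?m"
      using that m by (intro frac_le) auto
    then show ?thesis
      using that m
      by (metis abs_divide abs_ge_zero abs_of_pos order_less_le_trans power2_abs power_mono)
  qed
  have "\<bar>ln F - ln p - (F - p) / p\<bar> \<le> 2 * ((F - p) / p)\<^sup>2"
    using F t p by (intro ln_linearization) auto
  moreover have "\<bar>ln (1 - F) - ln (1 - p) - ((1 - F) - (1 - p)) / (1 - p)\<bar>
      \<le> 2 * (((1 - F) - (1 - p)) / (1 - p))\<^sup>2"
    using F t p by (intro ln_linearization) (auto simp: abs_minus_commute)
  moreover have "((F - p) / p)\<^sup>2 \<le> (t / ?m)\<^sup>2" "(((1 - F) - (1 - p)) / (1 - p))\<^sup>2 \<le> (t / ?m)\<^sup>2"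
    using F by (auto intro!: sq)
  moreover have "logit F - logit p - (1 / p + 1 / (1 - p)) * (F - p)
      = (ln F - ln p - (F - p) / p) - (ln (1 - F) - ln (1 - p) - ((1 - F) - (1 - p)) / (1 - p))"
    using p by (simp add: logit_def field_simps)
  ultimately show ?thesis
    by (simp add: power_divide)
qed

lemma pe_bounds: "0 < w (fst e) \<Longrightarrow> 0 < w (snd e) \<Longrightarrow> 0 < pe w e \<and> pe w e < 1"
  by (simp add: pe_def)

lemma Delta_eq_logit_remainder:
  assumes w: "0 < w (fst e)" "0 < w (snd e)" and F: "0 < Fr k X e" "Fr k X e < 1"
  shows "Delta w k X e = logit (Fr k X e) - logit (pe w e)
           - (1 / pe w e + 1 / (1 - pe w e)) * (Fr k X e - pe w e)"
proof -
  have "ln (Rr k X e) = logit (Fr k X e)"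
    using F by (simp add: Rr_def logit_def ln_div)
  moreover have "ln (rho w e) = logit (pe w e)"
    using w by (simp add: logit_def rho_def pe_def ln_div field_simps)
  moreover have "vv w e = 1 / pe w e + 1 / (1 - pe w e)"
    using w by (simp add: vv_def rho_def pe_def field_simps power2_eq_square)
  ultimately show ?thesis by (simp add: Delta_def VFp_def)
qed

lemma min_pe_ge:
  assumes w: "0 < w (fst e)" "0 < w (snd e)"
    and b: "w (fst e) / w (snd e) \<le> b" "w (snd e) / w (fst e) \<le> b" "1 \<le> b"
  shows "1 / (2 * b) \<le> min (pe w e) (1 - pe w e)"
proof -
  have p: "0 < pe w e" "0 < 1 - pe w e"
    using pe_bounds[OF w] by auto
  have "1 / pe w e = 1 + w (snd e) / w (fst e)" and "1 / (1 - pe w e) = 1 + w (fst e) / w (snd e)"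
    using w by (simp_all add: pe_def field_simps)
  then have le: "1 / pe w e \<le> 2 * b" "1 / (1 - pe w e) \<le> 2 * b"
    using b by linarith+
  have "inverse (2 * b) \<le> inverse (1 / pe w e)"
    by (rule le_imp_inverse_le[OF le(1)]) (use p in simp)
  moreover have "inverse (2 * b) \<le> inverse (1 / (1 - pe w e))"
    by (rule le_imp_inverse_le[OF le(2)]) (use p in simp)
  ultimately have "1 / (2 * b) \<le> pe w e" and "1 / (2 * b) \<le> 1 - pe w e"
    by (simp_all only: inverse_eq_divide) simp_all
  then show ?thesis by (rule min.boundedI)
qed

lemma C_le_min_pe_mult_k:
  assumes w: "0 < w (fst e)" "0 < w (snd e)"
    and b: "w (fst e) / w (snd e) \<le> b" "w (snd e) / w (fst e) \<le> b" "1 \<le> b"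
    and k: "32 * b * C \<le> real k" and C: "0 \<le> C"
  shows "16 * C \<le> min (pe w e) (1 - pe w e) * real k"
proof -
  have "16 * C = 1 / (2 * b) * (32 * b * C)"
    using b by (simp add: field_simps)
  also have "\<dots> \<le> min (pe w e) (1 - pe w e) * real k"
  proof (rule mult_mono[OF min_pe_ge[OF w b] k])
    show "0 \<le> min (pe w e) (1 - pe w e)" using pe_bounds[OF w] by simp
    show "0 \<le> 32 * b * C" using b C by simp
  qed
  finally show ?thesis .
qed

definition Fr_far :: "(nat \<Rightarrow> real) \<Rightarrow> nat \<Rightarrow> real \<Rightarrow> (nat \<times> nat \<Rightarrow> nat) \<Rightarrow> nat \<times> nat \<Rightarrow> bool" where
  "Fr_far w k C X e \<longleftrightarrow> 2 * sqrt (min (pe w e) (1 - pe w e) * C / real k) \<le> \<bar>Fr k X e - pe w e\<bar>"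

lemma Delta_small_if_not_Fr_far:
  assumes w: "0 < w (fst e)" "0 < w (snd e)"
    and b: "w (fst e) / w (snd e) \<le> b" "w (snd e) / w (fst e) \<le> b" "1 \<le> b"
    and k: "0 < k" "32 * b * C \<le> real k" and C: "0 \<le> C"
    and F: "\<not> Fr_far w k C X e"
  shows "0 < Fr k X e \<and> Fr k X e < 1 \<and> \<bar>Delta w k X e\<bar> \<le> 32 * b * C / real k"
proof -
  let ?p = "pe w e" and ?F = "Fr k X e"
  let ?m = "min ?p (1 - ?p)"
  define t where "t = 2 * sqrt (?m * C / real k)"
  have p: "0 < ?p" "?p < 1" using pe_bounds[OF w] by auto
  have m: "0 < ?m" using p by simp
  have "1 / ?m \<le> 1 / (1 / (2 * b))"
    by (rule divide_left_mono[OF min_pe_ge[OF w b]]) (use m b in auto)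
  then have m_inv: "1 / ?m \<le> 2 * b" by simp
  have t2: "t\<^sup>2 = 4 * ?m * C / real k"
    using m C k by (simp add: t_def power_mult_distrib)
  have "?m * (16 * C) \<le> ?m * (?m * real k)"
    by (rule mult_left_mono) (use C_le_min_pe_mult_k[OF w b k(2) C] m in auto)
  then have "t\<^sup>2 \<le> (?m / 2)\<^sup>2"
    using k unfolding t2 by (simp add: power2_eq_square field_simps)
  then have t: "t \<le> ?m / 2"
    by (rule power2_le_imp_le) (use m in auto)
  have F_t: "\<bar>?F - ?p\<bar> \<le> t"
    using F by (simp add: Fr_far_def t_def)
  have "t \<le> ?p / 2" "t \<le> (1 - ?p) / 2"
    using t by auto
  then have F01: "0 < ?F" "?F < 1"
    using F_t p by (auto simp: abs_le_iff)
  have "\<bar>Delta w k X e\<bar> \<le> 4 * t\<^sup>2 / ?m\<^sup>2"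
    using logit_linearization[OF p t F_t] Delta_eq_logit_remainder[OF w F01] by simp
  also have "\<dots> = 16 * C / real k * (1 / ?m)"
    using m unfolding t2 by (simp add: power2_eq_square field_simps)
  also have "\<dots> \<le> 16 * C / real k * (2 * b)"
    by (rule mult_left_mono) (use m_inv C k in auto)
  finally show ?thesis
    using F01 by (simp add: ac_simps)
qed

lemma prob_Fr_far_le:
  assumes E: "finite E" "e \<in> E" and w: "0 < w (fst e)" "0 < w (snd e)"
    and k: "0 < k" and C: "0 \<le> C" "C \<le> min (pe w e) (1 - pe w e) * real k"
  shows "measure_pmf.prob (outcomes E w k) {X. Fr_far w k C X e} \<le> 2 * exp (- C)"
proof -
  define m where "m = min (pe w e) (1 - pe w e)"
  define t where "t = 2 * sqrt (m * C / real k)"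
  have p: "0 < pe w e" "pe w e < 1" using pe_bounds[OF w] by auto
  have m: "0 < m" using p by (simp add: m_def)
  have t2: "t\<^sup>2 = 4 * (m * C / real k)"
    using m C k by (simp add: t_def power_mult_distrib)
  have "m * C / real k \<le> m * m"
    using mult_left_mono[OF C(2), of m] m k by (simp add: m_def field_simps)
  then have "t\<^sup>2 \<le> (2 * m)\<^sup>2"
    by (simp only: t2) (simp add: power2_eq_square)
  then have "t \<le> 2 * m"
    by (rule power2_le_imp_le) (use m in auto)
  moreover have "0 \<le> t" using m C by (simp add: t_def)
  ultimately have "measure_pmf.prob (outcomes E w k) {X. t \<le> \<bar>Fr k X e - pe w e\<bar>}
      \<le> 2 * exp (- real k * t\<^sup>2 / (4 * m))"
    unfolding m_def by (intro prob_Fr_deviation[OF E p k])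
  also have "- real k * t\<^sup>2 / (4 * m) = - C"
    using m k by (simp add: t2)
  finally show ?thesis
    by (simp only: Fr_far_def t_def m_def)
qed

lemma card_mult_two_exp_neg_le:
  fixes \<delta> C :: real
  assumes n: "n \<ge> 1" and \<delta>: "0 < \<delta>" "\<delta> \<le> exp (-1)" and C: "4 * ln (real n / \<delta>) \<le> C"
    and N: "N \<le> n\<^sup>2"
  shows "real N * (2 * exp (- C)) \<le> \<delta>"
proof -
  have "exp (- C) \<le> exp (- (4 * ln (real n / \<delta>)))"
    using C by simp
  also have "\<dots> = inverse ((real n / \<delta>) powr 4)"
    using n \<delta> by (simp add: powr_def exp_minus)
  also have "\<dots> = (\<delta> / real n) ^ 4"
    using n \<delta> by (simp add: power_divide)
  finally have "real N * (2 * exp (- C)) \<le> real n ^ 2 * (2 * (\<delta> / real n) ^ 4)"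
    using N by (intro mult_mono) (auto simp flip: of_nat_power)
  also have "\<dots> = 2 * \<delta> ^ 4 / real n ^ 2"
    using n by (simp add: field_simps power_divide)
  also have "\<dots> \<le> 2 * \<delta> ^ 4"
    using n \<delta> by (simp add: divide_le_eq)
  also have "\<dots> \<le> \<delta>"
  proof -
    have "\<delta> * 2 \<le> \<delta> * exp 1"
      using exp_ge_add_one_self[of 1] \<delta> by (intro mult_left_mono) auto
    also have "\<dots> \<le> 1"
      using \<delta> by (simp add: exp_minus field_simps)
    finally have "\<delta> \<le> 1 / 2" by simp
    then have "\<delta> ^ 3 \<le> (1 / 2) ^ 3"
      using \<delta> by (intro power_mono) auto
    then show ?thesis
      using \<delta> by (simp add: power_numeral_reduce field_simps)
  qed
  finally show ?thesis .
qed

lemma E_max_ge_1: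
  assumes og: "oriented_graph n E" and e: "e \<in> E"
  shows "1 \<le> E_max n E"
proof -
  obtain u v where uv: "e = (u, v)" by (cases e)
  have u_v: "u \<in> verts n" "v \<in> verts n" "u \<noteq> v"
    using oriented_graph_edgeD[OF og e] uv by auto
  have "simple_path E u v [u, v]"
    using e uv u_v by (auto simp: simple_path_def adj_def less_Suc_eq)
  moreover have "edge_on_path (u, v) [u, v]"
    by (auto simp: edge_on_path_def intro!: exI[of _ 0])
  ultimately have "(u, v) \<in> path_edges E u v"
    using e uv by (auto simp: path_edges_def)
  moreover have "finite (path_edges E u v)"
    using oriented_graph_finite[OF og] by (rule rev_finite_subset) (auto simp: path_edges_def)
  ultimately have "card (path_edges E u v) \<noteq> 0"
    by (auto simp: card_eq_0_iff)
  then have "1 \<le> card (path_edges E u v)"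
    by simp
  also have "\<dots> \<le> E_max n E"
  proof -
    have "finite {card (path_edges E i j) | i j. i \<in> verts n \<and> j \<in> verts n}"
      by (rule finite_image_set2) (simp_all add: verts_def)
    then show ?thesis
      unfolding E_max_def using u_v by (intro Max_ge) blast+
  qed
  finally show ?thesis .
qed

lemma sample_size_ge:
  assumes og: "oriented_graph n E" and e: "e \<in> E" and b: "1 \<le> b" and C: "0 < C"
    and k: "32 * b * (C + 1) * max (Omega_max n E) (real (E_max n E)) \<le> real k"
  shows "0 < k" "32 * b * C \<le> real k"
proof -
  have "1 \<le> max (Omega_max n E) (real (E_max n E))"
    using E_max_ge_1[OF og e] by linarith
  then have "32 * b * (C + 1) * 1 \<le> 32 * b * (C + 1) * max (Omega_max n E) (real (E_max n E))"
    by (rule mult_left_mono) (use b C in simp)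
  moreover have "32 * b * (C + 1) = 32 * b * C + 32 * b"
    by (simp add: algebra_simps)
  ultimately show "32 * b * C \<le> real k"
    using b k by linarith
  moreover have "0 < 32 * b * C"
    using b C by simp
  ultimately have "0 < real k" by linarith
  then show "0 < k" by simp
qed

lemma edge_weight_bounds:
  assumes "oriented_graph n E" "e \<in> E"
    and "\<forall>i\<in>verts n. w i > 0" "\<forall>i\<in>verts n. \<forall>j\<in>verts n. w i / w j \<le> b"
  shows "0 < w (fst e)" "0 < w (snd e)" "w (fst e) / w (snd e) \<le> b" "w (snd e) / w (fst e) \<le> b"
  using oriented_graph_edgeD[OF assms(1,2)] assms(3,4) by auto

lemma prob_exists_Fr_far_le:
  assumes n: "n \<ge> 1" and og: "oriented_graph n E"
    and w: "\<forall>i\<in>verts n. w i > 0" and wb: "\<forall>i\<in>verts n. \<forall>j\<in>verts n. w i / w j \<le> b"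
    and b: "1 \<le> b" and \<delta>: "0 < \<delta>" "\<delta> \<le> exp (-1)" and C: "4 * ln (real n / \<delta>) \<le> C" "0 < C"
    and k: "32 * b * (C + 1) * max (Omega_max n E) (real (E_max n E)) \<le> real k"
  shows "measure_pmf.prob (outcomes E w k) {X. \<exists>e\<in>E. Fr_far w k C X e} \<le> \<delta>"
proof -
  let ?\<Omega> = "outcomes E w k"
  have fin: "finite E" using og by (rule oriented_graph_finite)
  have "measure_pmf.prob ?\<Omega> {X. \<exists>e\<in>E. Fr_far w k C X e}
      = measure_pmf.prob ?\<Omega> (\<Union>e\<in>E. {X. Fr_far w k C X e})"
    by (rule arg_cong[where f = "measure_pmf.prob ?\<Omega>"]) blast
  also have "\<dots> \<le> (\<Sum>e\<in>E. measure_pmf.prob ?\<Omega> {X. Fr_far w k C X e})"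
    using fin by (intro measure_pmf.finite_measure_subadditive_finite) auto
  also have "\<dots> \<le> (\<Sum>e\<in>E. 2 * exp (- C))"
  proof (rule sum_mono)
    fix e assume e: "e \<in> E"
    note we = edge_weight_bounds[OF og e w wb] and ke = sample_size_ge[OF og e b C(2) k]
    have "C \<le> min (pe w e) (1 - pe w e) * real k"
      using C_le_min_pe_mult_k[OF we b ke(2)] C(2) by linarith
    then show "measure_pmf.prob ?\<Omega> {X. Fr_far w k C X e} \<le> 2 * exp (- C)"
      using prob_Fr_far_le[OF fin e we(1,2) ke(1)] C(2) by simp
  qed
  also have "\<dots> \<le> \<delta>"
    using card_mult_two_exp_neg_le[OF n \<delta> C(1) card_edges_le[OF og]] by simp
  finally show ?thesis .
qed

theorem log_What_error_whp:
  fixes n :: nat and E :: "(nat \<times> nat) set" and w :: "nat \<Rightarrow> real" and b \<delta> C :: real and k :: nat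
  assumes n: "n \<ge> 1" and og: "oriented_graph n E" and cg: "connected_graph n E"
    and w: "\<forall>i\<in>verts n. w i > 0" and wb: "\<forall>i\<in>verts n. \<forall>j\<in>verts n. w i / w j \<le> b"
    and \<delta>: "0 < \<delta>" "\<delta> \<le> exp (-1)" and C: "4 * ln (real n / \<delta>) \<le> C"
    and k: "32 * b * (C + 1) * max (Omega_max n E) (real (E_max n E)) \<le> real k"
  shows "1 - \<delta> \<le> measure_pmf.prob (outcomes E w k)
        {X. (\<forall>e\<in>E. 0 < Fr k X e \<and> Fr k X e < 1) \<and>
            (\<forall>i\<in>verts n. \<forall>j\<in>verts n.
               (log_What n E (\<lambda>e. ln (Rr k X e)) i - log_What n E (\<lambda>e. ln (Rr k X e)) j
                  - ln (w i / w j))\<^sup>2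
               \<le> 2 * sqnorm_ij n E i j (VFp w k X) + 2 * sqnorm_ij n E i j (Delta w k X)) \<and>
            (\<forall>e\<in>E. \<bar>Delta w k X e\<bar> \<le> 32 * b * C / real k)}"
    (is "_ \<le> measure_pmf.prob ?\<Omega> ?good")
proof -
  let ?far = "{X. \<exists>e\<in>E. Fr_far w k C X e}"
  have b: "1 \<le> b" using wb w n by (force simp: verts_def)
  have "1 \<le> ln (real n / \<delta>)"
    using n \<delta> by (subst ln_ge_iff) (auto simp: exp_minus field_simps)
  then have C0: "0 < C" using C by linarith
  have "UNIV - ?far \<subseteq> ?good"
  proof
    fix X assume X: "X \<in> UNIV - ?far"
    have "0 < Fr k X e \<and> Fr k X e < 1 \<and> \<bar>Delta w k X e\<bar> \<le> 32 * b * C / real k" if e: "e \<in> E" for e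
      using X e sample_size_ge[OF og e b C0 k] C0
      by (intro Delta_small_if_not_Fr_far[OF edge_weight_bounds[OF og e w wb] b]) auto
    then show "X \<in> ?good"
      using log_What_error_le[OF og cg n w] by blast
  qed
  then have "1 - measure_pmf.prob ?\<Omega> ?far \<le> measure_pmf.prob ?\<Omega> ?good"
    using measure_pmf.prob_compl[of ?far ?\<Omega>]
      measure_pmf.finite_measure_mono[of "UNIV - ?far" ?good ?\<Omega>] by simp
  then show ?thesis
    using prob_exists_Fr_far_le[OF n og w wb b \<delta> C C0 k] by linarith
qed

theorem lemma3:
  shows "\<exists>c1 c2 C0 :: real. c1 > 0 \<and> c2 > 0 \<and> C0 > 0 \<and>
    (\<forall>(n::nat) (E::(nat \<times> nat) set) (w::nat \<Rightarrow> real) (b::real) (\<delta>::real) (C::real) (k::nat).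
      n \<ge> 1 \<longrightarrow> oriented_graph n E \<longrightarrow> connected_graph n E \<longrightarrow>
      (\<forall>i\<in>verts n. w i > 0) \<longrightarrow>
      (\<forall>i\<in>verts n. \<forall>j\<in>verts n. w i / w j \<le> b) \<longrightarrow>
      (\<Sum>i\<in>verts n. ln (w i)) = 0 \<longrightarrow>
      0 < \<delta> \<longrightarrow> \<delta> \<le> exp (-1) \<longrightarrow>
      C \<ge> c1 * ln (real n / \<delta>) \<longrightarrow>
      real k \<ge> c2 * b * (C + 1) * max (Omega_max n E) (real (E_max n E)) \<longrightarrow>
      measure_pmf.prob (outcomes E w k)
        {X. (\<forall>e\<in>E. 0 < Fr k X e \<and> Fr k X e < 1) \<and>
            (\<forall>i\<in>verts n. \<forall>j\<in>verts n.
               (log_What n E (\<lambda>e. ln (Rr k X e)) i - log_What n E (\<lambda>e. ln (Rr k X e)) j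
                  - ln (w i / w j))\<^sup>2
               \<le> 2 * sqnorm_ij n E i j (VFp w k X) + 2 * sqnorm_ij n E i j (Delta w k X)) \<and>
            (\<forall>e\<in>E. \<bar>Delta w k X e\<bar> \<le> C0 * b * C / real k)}
      \<ge> 1 - \<delta>)"
  by (rule exI[of _ 4], rule exI[of _ 32], rule exI[of _ 32]) (auto intro!: log_What_error_whp)

end
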